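(* There exists a universal constant $c\in(\frac12,1)$ such that for every $d\ge1$, every $\theta\in\mathbb{R}^d$ and every $\varpi\in(0,\frac12]$, with $\rho:=1-2\varpi\in[0,1)$, $$|M_1(\theta,\varpi)-\varpi|\le\frac{(1-c\rho^2)\,\|\theta\|_2}{2}\qquad\text{and}\qquad \|M_2(\theta,\varpi)\|_2\le\Big(1-\frac{\rho^2}{2}\Big)\|\theta\|_2 .$$
   Context: Setting with unknown weight and $\sigma=1$: $X\sim\mathcal N(0,I_d)$. For $\theta,x\in\mathbb{R}^d$ and $\varpi\in(0,1)$, let $w_{\theta,\varpi}(x)=\dfrac{\varpi e^{-\|\theta-x\|_2^2/2}}{\varpi e^{-\|\theta-x\|_2^2/2}+(1-\varpi)e^{-\|\theta+x\|_2^2/2}}$. The population EM operators for the weight and location are $M_1(\theta,\varpi)=\mathbb{E}[w_{\theta,\varpi}(X)]$ and $M_2(\theta,\varpi)=\mathbb{E}[(2w_{\theta,\varpi}(X)-1)X]$. *)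

theory Defs
  imports "HOL-Probability.Probability"
begin

text \<open>Vectors of R^d are represented as functions nat => real, only the
coordinates i < d being relevant.\<close>

definition vnorm :: "nat \<Rightarrow> (nat \<Rightarrow> real) \<Rightarrow> real" where
  "vnorm d v = sqrt (\<Sum>i<d. (v i)\<^sup>2)"

definition gauss :: "nat \<Rightarrow> (nat \<Rightarrow> real) measure" where
  "gauss d = PiM {..<d} (\<lambda>_. density lborel std_normal_density)"

definition wgt :: "nat \<Rightarrow> (nat \<Rightarrow> real) \<Rightarrow> real \<Rightarrow> (nat \<Rightarrow> real) \<Rightarrow> real" where
  "wgt d \<theta> pw x =
     pw * exp (- (vnorm d (\<lambda>i. \<theta> i - x i))\<^sup>2 / 2) /
     (pw * exp (- (vnorm d (\<lambda>i. \<theta> i - x i))\<^sup>2 / 2)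
      + (1 - pw) * exp (- (vnorm d (\<lambda>i. \<theta> i + x i))\<^sup>2 / 2))"

definition M1 :: "nat \<Rightarrow> (nat \<Rightarrow> real) \<Rightarrow> real \<Rightarrow> real" where
  "M1 d \<theta> pw = (\<integral>x. wgt d \<theta> pw x \<partial>gauss d)"

definition M2 :: "nat \<Rightarrow> (nat \<Rightarrow> real) \<Rightarrow> real \<Rightarrow> (nat \<Rightarrow> real)" where
  "M2 d \<theta> pw = (\<lambda>i. if i < d then (\<integral>x. (2 * wgt d \<theta> pw x - 1) * x i \<partial>gauss d) else 0)"

end

theory Submission
  imports Defs "HOL-Real_Asymp.Real_Asymp"
begin

text \<open>Put \<open>a = ln (\<varpi> / (1 - \<varpi>)) \<le> 0\<close> and \<open>S = \<langle>\<theta>, X\<rangle>\<close>, a centred Gaussian with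
  \<open>E S\<^sup>2 = \<parallel>\<theta>\<parallel>\<^sup>2\<close>. The weight is the logistic function \<open>\<sigma> (a + 2 S)\<close>.

  By Stein's identity \<open>M\<^sub>2 = E[4 \<sigma>'(a + 2 S)] \<theta>\<close>, and \<open>4 \<sigma>' \<le> 4 \<varpi> (1 - \<varpi>) = 1 - \<rho>\<^sup>2\<close> on the event
  \<open>S \<le> 0\<close>, which has probability at least \<open>1/2\<close>; elsewhere \<open>4 \<sigma>' \<le> 1\<close>.

  Since \<open>S\<close> is symmetric, \<open>2 (M\<^sub>1 - \<varpi>) = E[\<sigma>(a + 2S) + \<sigma>(a - 2S) - 2 \<sigma>(a)]\<close>. An elementary
  estimate of this second difference by \<open>(1 - c \<rho>\<^sup>2) \<bar>2S\<bar> / 2\<close> with \<open>c = 501/1000\<close>, together with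
  \<open>E \<bar>S\<bar> \<le> \<parallel>\<theta>\<parallel>\<close>, gives the bound on \<open>M\<^sub>1\<close>.\<close>

section \<open>The logistic function\<close>

definition sigmoid :: "real \<Rightarrow> real" where
  "sigmoid u = 1 / (1 + exp (- u))"

lemma sigmoid_pos: "0 < sigmoid u" and sigmoid_less_1: "sigmoid u < 1"
  by (auto simp: sigmoid_def add_pos_pos)

lemma abs_sigmoid_le_1: "\<bar>sigmoid u\<bar> \<le> 1"
  using sigmoid_pos[of u] sigmoid_less_1[of u] by simp

lemma sigmoid_0: "sigmoid 0 = 1/2"
  by (simp add: sigmoid_def)

lemma sigmoid_logit: "0 < p \<Longrightarrow> p < 1 \<Longrightarrow> sigmoid (ln (p / (1 - p))) = p"
  by (simp add: sigmoid_def exp_minus field_simps)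

lemma exp_eq_sigmoid_odds: "exp u = sigmoid u / (1 - sigmoid u)"
proof -
  have "exp u + 1 \<noteq> 0"
    using exp_gt_zero[of u] by linarith
  then show ?thesis
    by (simp add: sigmoid_def divide_simps exp_minus)
qed

lemma sigmoid_le_exp: "sigmoid u \<le> exp u"
proof -
  have "1 \<le> exp u * (1 + exp (- u))"
    by (simp add: distrib_left exp_minus field_simps)
  then show ?thesis
    by (simp add: sigmoid_def field_simps add_pos_pos)
qed

lemma sigmoid_mono: "u \<le> v \<Longrightarrow> sigmoid u \<le> sigmoid v"
  unfolding sigmoid_def by (auto intro!: divide_left_mono add_pos_pos mult_pos_pos)

lemma has_real_derivative_sigmoid:
  "(sigmoid has_real_derivative sigmoid u * (1 - sigmoid u)) (at u)"
proof -
  have pos: "0 < 1 + exp (- u)"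
    by (simp add: add_pos_pos)
  have "(sigmoid has_real_derivative exp (- u) / (1 + exp (- u))\<^sup>2) (at u)"
    unfolding sigmoid_def[abs_def] using pos
    by (auto intro!: derivative_eq_intros simp: power2_eq_square)
  moreover have "exp (- u) / (1 + exp (- u))\<^sup>2 = sigmoid u * (1 - sigmoid u)"
    unfolding sigmoid_def using pos by (simp add: divide_simps power2_eq_square)
  ultimately show ?thesis
    by simp
qed

lemma continuous_on_sigmoid: "continuous_on A sigmoid"
  using has_real_derivative_sigmoid
  by (intro continuous_at_imp_continuous_on ballI DERIV_isCont) auto

lemma borel_measurable_sigmoid[measurable]: "sigmoid \<in> borel_measurable borel"
  by (rule borel_measurable_continuous_onI[OF continuous_on_sigmoid])

lemma sigmoid_slope_le_quarter: "sigmoid u * (1 - sigmoid u) \<le> 1/4"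
proof -
  have "sigmoid u * (1 - sigmoid u) = 1/4 - (sigmoid u - 1/2)\<^sup>2"
    by (simp add: power2_eq_square algebra_simps)
  then show ?thesis
    by simp
qed

lemma mult_one_minus_mono:
  fixes s p :: real
  assumes "0 \<le> s" "s \<le> p" "p \<le> 1/2"
  shows "s * (1 - s) \<le> p * (1 - p)"
proof -
  have "0 \<le> (p - s) * (1 - p - s)"
    using assms by (intro mult_nonneg_nonneg) auto
  then show ?thesis
    by (simp add: algebra_simps)
qed

lemma sigmoid_mean_value:
  assumes "u \<le> v"
  obtains z where "u \<le> z" "z \<le> v" "sigmoid v - sigmoid u = (v - u) * (sigmoid z * (1 - sigmoid z))"
proof (cases "u = v")
  case False
  with assms have "u < v"
    by simp
  obtain z where "u < z" "z < v" "sigmoid v - sigmoid u = (v - u) * (sigmoid z * (1 - sigmoid z))"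
    using MVT2[OF \<open>u < v\<close>, of sigmoid "\<lambda>z. sigmoid z * (1 - sigmoid z)"] has_real_derivative_sigmoid by blast
  then show ?thesis
    by (intro that[of z]) auto
qed (use that in auto)

lemma sigmoid_nonpos_le_half: "u \<le> 0 \<Longrightarrow> sigmoid u \<le> 1/2"
  using sigmoid_mono[of u 0] by (simp add: sigmoid_0)

lemma sigmoid_fall_le:
  assumes a: "a \<le> 0" and y: "0 \<le> y"
  shows "sigmoid a - sigmoid (a - y) \<le> y * (sigmoid a * (1 - sigmoid a))"
proof -
  obtain z where z: "a - y \<le> z" "z \<le> a"
    and mvt: "sigmoid a - sigmoid (a - y) = y * (sigmoid z * (1 - sigmoid z))"
    using sigmoid_mean_value[of "a - y" a] y by auto
  have "sigmoid z * (1 - sigmoid z) \<le> sigmoid a * (1 - sigmoid a)"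
    using sigmoid_pos[of z] sigmoid_mono[OF z(2)] sigmoid_nonpos_le_half[OF a]
    by (intro mult_one_minus_mono) auto
  then show ?thesis
    unfolding mvt using y by (rule mult_left_mono)
qed

text \<open>For \<open>sigmoid a \<ge> 1/1000\<close> the global slope bound \<open>1/4\<close> suffices. Otherwise, either
  \<open>y \<ge> 5\<close> and the trivial bound \<open>1\<close> on the increment wins, or the slope on \<open>[a, a + y]\<close> is at most
  \<open>sigmoid (a + 5) \<le> e\<^sup>5 \<cdot> sigmoid a / (1 - sigmoid a) < (1 - 501/1000) / 2\<close>.\<close>
lemma sigmoid_rise_le:
  assumes a: "a \<le> 0" and y: "0 \<le> y"
  shows "sigmoid (a + y) - sigmoid a \<le> (1 - 501/1000 * (1 - 2 * sigmoid a)\<^sup>2) * y / 2"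
proof -
  define p where "p = sigmoid a"
  define K where "K = (1 - 501/1000 * (1 - 2 * p)\<^sup>2) / 2"
  have p: "0 < p" "p \<le> 1/2"
    unfolding p_def using sigmoid_pos sigmoid_nonpos_le_half[OF a] by auto
  have "(1 - 2 * p)\<^sup>2 \<le> 1"
    using p by (simp add: power_le_one)
  then have K_ge: "249/1000 \<le> K"
    by (simp add: K_def)
  obtain w where w: "a \<le> w" "w \<le> a + y"
    and mvt: "sigmoid (a + y) - sigmoid a = y * (sigmoid w * (1 - sigmoid w))"
    using sigmoid_mean_value[of a "a + y"] y by auto
  show ?thesis
  proof (cases "p \<ge> 1/1000 \<or> y \<ge> 5")
    case True
    then consider "1/1000 \<le> p" | "5 \<le> y"
      by linarith
    then show ?thesis
    proof cases
      case 1
      have "(1 - 2 * p)\<^sup>2 \<le> (998/1000)\<^sup>2"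
        using 1 p by (intro power_mono) auto
      then have "sigmoid w * (1 - sigmoid w) \<le> K"
        using sigmoid_slope_le_quarter[of w] by (simp add: K_def power2_eq_square)
      from mult_left_mono[OF this y] show ?thesis
        unfolding mvt by (simp add: K_def p_def mult.commute)
    next
      case 2
      have "sigmoid (a + y) - sigmoid a \<le> 1"
        using sigmoid_less_1[of "a + y"] sigmoid_pos[of a] by simp
      also have "1 \<le> K * y"
        using 2 K_ge mult_mono[of "249/1000" K 5 y] by simp
      finally show ?thesis
        by (simp add: K_def p_def)
    qed
  next
    case False
    then have small: "p < 1/1000" "y < 5"
      by auto
    have "exp (5::real) = exp 1 ^ 5"
      by (simp add: exp_of_nat_mult[symmetric])
    also have "\<dots> \<le> 3 ^ 5"
      using exp_le by (intro power_mono) auto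
    finally have e5: "exp (5::real) \<le> 243"
      by simp
    have odds: "exp a \<le> 1/999"
      unfolding exp_eq_sigmoid_odds[of a] p_def[symmetric] using small p by (simp add: divide_simps)
    have "sigmoid w * (1 - sigmoid w) \<le> sigmoid w"
      using sigmoid_pos[of w] sigmoid_less_1[of w] by (simp add: mult_left_le)
    also have "\<dots> \<le> sigmoid (a + 5)"
      using w(2) small by (intro sigmoid_mono) simp
    also have "\<dots> \<le> exp a * exp 5"
      using sigmoid_le_exp[of "a + 5"] by (simp add: exp_add)
    also have "\<dots> \<le> 1/999 * 243"
      using odds e5 by (intro mult_mono) auto
    also have "\<dots> \<le> K"
      using K_ge by simp
    finally have "sigmoid w * (1 - sigmoid w) \<le> K" .
    from mult_left_mono[OF this y] show ?thesis
      unfolding mvt by (simp add: K_def p_def mult.commute)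
  qed
qed

lemma sigmoid_second_difference_le:
  assumes a: "a \<le> 0"
  shows "\<bar>sigmoid (a + y) + sigmoid (a - y) - 2 * sigmoid a\<bar>
    \<le> (1 - 501/1000 * (1 - 2 * sigmoid a)\<^sup>2) * \<bar>y\<bar> / 2"
proof -
  define K where "K = 1 - 501/1000 * (1 - 2 * sigmoid a)\<^sup>2"
  have nonneg_case: "\<bar>sigmoid (a + y) + sigmoid (a - y) - 2 * sigmoid a\<bar> \<le> K * y / 2"
    if y: "0 \<le> y" for y
  proof -
    define p where "p = sigmoid a"
    have p: "0 < p" "p \<le> 1/2"
      unfolding p_def using sigmoid_pos sigmoid_nonpos_le_half[OF a] by auto
    have "(1 - 2 * p)\<^sup>2 \<le> 1"
      using p by (intro power_le_one) auto
    have "p * (1 - p) = (1 - (1 - 2 * p)\<^sup>2) / 4"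
      by (simp add: power2_eq_square algebra_simps)
    also have "\<dots> \<le> K / 2"
      using \<open>(1 - 2 * p)\<^sup>2 \<le> 1\<close> by (simp add: K_def p_def[symmetric])
    finally have "y * (p * (1 - p)) \<le> y * (K / 2)"
      using y by (rule mult_left_mono)
    moreover have "y * (K / 2) = K * y / 2"
      by simp
    moreover have "sigmoid (a - y) \<le> p" "p \<le> sigmoid (a + y)"
      unfolding p_def using y by (auto intro: sigmoid_mono)
    ultimately show ?thesis
      using sigmoid_fall_le[OF a y, folded p_def] sigmoid_rise_le[OF a y, folded K_def]
      unfolding abs_le_iff p_def by linarith
  qed
  show ?thesis
  proof (cases "0 \<le> y")
    case False
    with nonneg_case[of "- y"] show ?thesis
      by (simp add: K_def add.commute)
  qed (use nonneg_case in \<open>simp add: K_def\<close>)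
qed

section \<open>The standard normal law and Stein's identity\<close>

definition std_normal :: "real measure" where
  "std_normal = density lborel std_normal_density"

lemma prob_space_std_normal: "prob_space std_normal"
  unfolding std_normal_def by (rule prob_space_normal_density) simp

lemma sets_std_normal[measurable_cong, simp]: "sets std_normal = sets borel"
  and space_std_normal[simp]: "space std_normal = UNIV"
  by (simp_all add: std_normal_def)

lemma integral_std_normal:
  "f \<in> borel_measurable borel \<Longrightarrow>
    (\<integral>x. f x \<partial>std_normal) = (\<integral>x. std_normal_density x * f x \<partial>lborel)"
  unfolding std_normal_def by (subst integral_density) auto

lemma integrable_std_normal_iff:
  "f \<in> borel_measurable borel \<Longrightarrow>
    integrable std_normal f \<longleftrightarrow> integrable lborel (\<lambda>x. std_normal_density x * f x)"
  unfolding std_normal_def by (subst integrable_density) auto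

lemma integrable_std_normal_id: "integrable std_normal (\<lambda>y. y)"
  using integrable_std_normal_moment[of 1] by (subst integrable_std_normal_iff) auto

lemma integral_std_normal_id: "(\<integral>y. y \<partial>std_normal) = 0"
  using integral_std_normal_moment_odd[of 0] by (subst integral_std_normal) auto

lemma integrable_std_normal_square: "integrable std_normal (\<lambda>y. y * y)"
  using integrable_std_normal_moment[of 2]
  by (subst integrable_std_normal_iff) (auto simp: power2_eq_square)

lemma integral_std_normal_square: "(\<integral>y. y * y \<partial>std_normal) = 1"
  using integral_std_normal_moment_even[of 1]
  by (subst integral_std_normal) (auto simp: power2_eq_square)

lemma distr_std_normal_uminus: "distr std_normal std_normal uminus = std_normal"
proof -
  have "distr std_normal std_normal uminus = distr std_normal borel uminus"
    by (rule distr_cong) auto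
  also have "\<dots> = density (distr lborel borel uminus) std_normal_density"
    unfolding std_normal_def by (subst density_distr) (auto simp: normal_density_def)
  also have "\<dots> = std_normal"
    unfolding lborel_distr_uminus std_normal_def ..
  finally show ?thesis .
qed

lemma integrable_bounded_mult:
  fixes f g :: "'a \<Rightarrow> real"
  assumes g: "integrable M g" and f[measurable]: "f \<in> borel_measurable M"
    and bound: "\<And>x. x \<in> space M \<Longrightarrow> \<bar>f x\<bar> \<le> B"
  shows "integrable M (\<lambda>x. f x * g x)"
proof (rule Bochner_Integration.integrable_bound)
  show "integrable M (\<lambda>x. B * \<bar>g x\<bar>)"
    using g by auto
  show "AE x in M. norm (f x * g x) \<le> norm (B * \<bar>g x\<bar>)"
  proof (intro AE_I2 impI)
    fix x assume "x \<in> space M"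
    then have "\<bar>f x\<bar> \<le> \<bar>B\<bar>"
      using bound by fastforce
    then show "norm (f x * g x) \<le> norm (B * \<bar>g x\<bar>)"
      by (simp add: abs_mult mult_right_mono)
  qed
qed (use g in auto)

lemma std_normal_density_has_real_derivative:
  "(std_normal_density has_real_derivative - x * std_normal_density x) (at x)"
proof -
  define k where "k = 1 / sqrt (2 * pi)"
  have "std_normal_density = (\<lambda>x. k * exp (- x\<^sup>2 / 2))"
    by (simp add: std_normal_density_def k_def fun_eq_iff)
  moreover have "((\<lambda>x. k * exp (- x\<^sup>2 / 2)) has_real_derivative
      k * (exp (- x\<^sup>2 / 2) * (- (2 * x) / 2))) (at x)"
    by (auto intro!: derivative_eq_intros)
  ultimately show ?thesis
    by (simp add: algebra_simps)
qed

lemma tendsto_std_normal_density_at_top: "(std_normal_density \<longlongrightarrow> 0) at_top"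
  and tendsto_std_normal_density_at_bot: "(std_normal_density \<longlongrightarrow> 0) at_bot"
  unfolding std_normal_density_def[abs_def] by real_asymp+

text \<open>Integrate \<open>(- h \<phi>)' = h \<phi> y - h' \<phi>\<close> over the line, using \<open>\<phi>' = - y \<phi>\<close>.\<close>
lemma std_normal_stein:
  fixes h h' :: "real \<Rightarrow> real"
  assumes der: "\<And>y. (h has_real_derivative h' y) (at y)"
    and cont: "continuous_on UNIV h'"
    and bound: "\<And>y. \<bar>h y\<bar> \<le> B" and bound': "\<And>y. \<bar>h' y\<bar> \<le> B"
  shows "(\<integral>y. h y * y \<partial>std_normal) = (\<integral>y. h' y \<partial>std_normal)"
proof -
  interpret prob_space std_normal
    by (rule prob_space_std_normal)
  have "continuous_on UNIV h"
    using der by (intro continuous_at_imp_continuous_on ballI DERIV_isCont) auto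
  then have [measurable]: "h \<in> borel_measurable borel" "h' \<in> borel_measurable borel"
    using cont by (auto intro: borel_measurable_continuous_onI)
  have "integrable std_normal (\<lambda>y. h y * y)"
    using bound by (intro integrable_bounded_mult integrable_std_normal_id) auto
  then have int1: "integrable lborel (\<lambda>y. std_normal_density y * (h y * y))"
    by (subst integrable_std_normal_iff[symmetric]) auto
  have "integrable std_normal h'"
    using bound' by (intro integrable_const_bound[where B = B]) auto
  then have int2: "integrable lborel (\<lambda>y. std_normal_density y * h' y)"
    by (subst integrable_std_normal_iff[symmetric]) auto
  define F where "F y = - h y * std_normal_density y" for y
  define f where "f y = std_normal_density y * (h y * y) - std_normal_density y * h' y" for y
  have "(F has_real_derivative f y) (at y)" for y
    unfolding F_def[abs_def] f_def
    by (rule derivative_eq_intros der std_normal_density_has_real_derivative refl)+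
       (simp add: algebra_simps)
  then have F_deriv: "(F has_vector_derivative f y) (at y)" for y
    by (simp add: has_real_derivative_iff_has_vector_derivative)
  have "isCont f y" for y
    using \<open>continuous_on UNIV h\<close> cont unfolding f_def std_normal_density_def
    by (intro continuous_intros) (auto simp: continuous_on_eq_continuous_at)
  moreover have "(F \<longlongrightarrow> 0) at_top" "(F \<longlongrightarrow> 0) at_bot"
  proof -
    have "norm (F y) \<le> B * std_normal_density y" for y
      unfolding F_def using bound[of y] by (simp add: abs_mult mult_right_mono)
    note F_small = Lim_null_comparison[OF always_eventually[OF allI[OF this]] tendsto_mult_right_zero]
    show "(F \<longlongrightarrow> 0) at_top" "(F \<longlongrightarrow> 0) at_bot"
      by (rule F_small tendsto_std_normal_density_at_top tendsto_std_normal_density_at_bot)+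
  qed
  moreover have "set_integrable lborel (einterval (-\<infinity>) \<infinity>) f"
    using int1 int2 by (simp add: f_def set_integrable_def einterval_def)
  ultimately have "(LBINT y=-\<infinity>..\<infinity>. f y) = 0 - 0"
    using F_deriv by (intro interval_integral_FTC_integrable) (auto simp: ereal_tendsto_simps)
  then have "(\<integral>y. f y \<partial>lborel) = 0"
    by (simp add: interval_lebesgue_integral_def set_lebesgue_integral_def einterval_def)
  then show ?thesis
    using int1 int2 by (simp add: f_def integral_std_normal)
qed

lemma std_normal_stein_affine:
  fixes g g' :: "real \<Rightarrow> real"
  assumes der: "\<And>s. (g has_real_derivative g' s) (at s)"
    and cont: "continuous_on UNIV g'"
    and bound: "\<And>s. \<bar>g s\<bar> \<le> B" and bound': "\<And>s. \<bar>g' s\<bar> \<le> B"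
  shows "(\<integral>y. g (c + b * y) * y \<partial>std_normal) = b * (\<integral>y. g' (c + b * y) \<partial>std_normal)"
proof -
  have B: "0 \<le> B"
    using bound[of 0] by simp
  have B_le: "B \<le> B * (1 + \<bar>b\<bar>)" and abs_b_le: "\<bar>b\<bar> * B \<le> B * (1 + \<bar>b\<bar>)"
    using B by (simp_all add: algebra_simps)
  have "(\<integral>y. g (c + b * y) * y \<partial>std_normal) = (\<integral>y. b * g' (c + b * y) \<partial>std_normal)"
  proof (rule std_normal_stein[where B = "B * (1 + \<bar>b\<bar>)"])
    fix y
    have "((\<lambda>y. c + b * y) has_real_derivative b) (at y)"
      by (auto intro!: derivative_eq_intros)
    from DERIV_chain2[OF der this]
    show "((\<lambda>y. g (c + b * y)) has_real_derivative b * g' (c + b * y)) (at y)"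
      by (simp add: mult.commute)
    show "\<bar>g (c + b * y)\<bar> \<le> B * (1 + \<bar>b\<bar>)"
      using bound[of "c + b * y"] B_le by linarith
    show "\<bar>b * g' (c + b * y)\<bar> \<le> B * (1 + \<bar>b\<bar>)"
      using mult_left_mono[OF bound'[of "c + b * y"], of "\<bar>b\<bar>"] abs_b_le
      by (simp add: abs_mult)
  next
    show "continuous_on UNIV (\<lambda>y. b * g' (c + b * y))"
      by (intro continuous_intros continuous_on_compose2[OF cont]) auto
  qed
  then show ?thesis
    by simp
qed

section \<open>The standard Gaussian measure on \<open>\<real>\<^sup>d\<close>\<close>

definition vdot :: "nat \<Rightarrow> (nat \<Rightarrow> real) \<Rightarrow> (nat \<Rightarrow> real) \<Rightarrow> real" where
  "vdot d \<theta> x = (\<Sum>j<d. \<theta> j * x j)"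

text \<open>\<open>compose\<close> leaves the coordinates \<open>\<ge> d\<close> undefined, as in the extensional space of
  \<open>gauss d\<close>, so that \<open>vneg d\<close> is measurable from \<open>gauss d\<close> to itself.\<close>
definition vneg :: "nat \<Rightarrow> (nat \<Rightarrow> real) \<Rightarrow> (nat \<Rightarrow> real)" where
  "vneg d = compose {..<d} uminus"

lemma vnorm_cong: "(\<And>i. i < d \<Longrightarrow> u i = v i) \<Longrightarrow> vnorm d u = vnorm d v"
  unfolding vnorm_def by simp

lemma vnorm_scale: "vnorm d (\<lambda>i. c * v i) = \<bar>c\<bar> * vnorm d v"
  unfolding vnorm_def by (simp add: power_mult_distrib sum_distrib_left[symmetric] real_sqrt_mult)

lemma vnorm_nonneg: "0 \<le> vnorm d v"
  unfolding vnorm_def by (simp add: sum_nonneg)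

lemma vnorm_square: "(vnorm d v)\<^sup>2 = (\<Sum>i<d. (v i)\<^sup>2)"
  unfolding vnorm_def by (simp add: sum_nonneg)

lemma vnorm_add_square_minus_diff_square:
  "(vnorm d (\<lambda>i. u i + v i))\<^sup>2 - (vnorm d (\<lambda>i. u i - v i))\<^sup>2 = 4 * vdot d u v"
  unfolding vnorm_square vdot_def sum_subtractf[symmetric] sum_distrib_left
  by (simp add: power2_eq_square algebra_simps)

lemma vdot_vneg: "vdot d \<theta> (vneg d x) = - vdot d \<theta> x"
  unfolding vdot_def vneg_def compose_def by (simp add: sum_negf[symmetric])

lemma vdot_eq_0_if_vnorm_eq_0: "vnorm d \<theta> = 0 \<Longrightarrow> vdot d \<theta> x = 0"
  unfolding vnorm_def vdot_def by (simp add: sum_nonneg_eq_0_iff)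

lemma gauss_eq_PiM: "gauss d = PiM {..<d} (\<lambda>_. std_normal)"
  unfolding gauss_def std_normal_def ..

lemma product_prob_space_std_normal: "product_prob_space (\<lambda>_::nat. std_normal)"
  by (rule product_prob_spaceI) (rule prob_space_std_normal)

lemma prob_space_gauss: "prob_space (gauss d)"
  unfolding gauss_eq_PiM by (rule prob_space_PiM) (rule prob_space_std_normal)

lemma borel_measurable_vdot[measurable]: "vdot d \<theta> \<in> borel_measurable (gauss d)"
  unfolding vdot_def[abs_def] gauss_eq_PiM by measurable

lemma measurable_vneg[measurable]: "vneg d \<in> measurable (gauss d) (gauss d)"
  unfolding vneg_def compose_def gauss_eq_PiM by measurable

lemma distr_gauss_vneg: "distr (gauss d) (gauss d) (vneg d) = gauss d"
proof -
  have "distr (gauss d) (gauss d) (vneg d) = PiM {..<d} (\<lambda>_. distr std_normal std_normal uminus)"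
    unfolding gauss_eq_PiM vneg_def
    by (rule distr_PiM_finite_prob_space') (auto intro: prob_space_std_normal)
  then show ?thesis
    unfolding distr_std_normal_uminus gauss_eq_PiM .
qed

lemma integral_gauss_vneg:
  fixes f :: "(nat \<Rightarrow> real) \<Rightarrow> real"
  assumes [measurable]: "f \<in> borel_measurable (gauss d)"
  shows "(\<integral>x. f (vneg d x) \<partial>gauss d) = (\<integral>x. f x \<partial>gauss d)"
  by (subst (2) distr_gauss_vneg[symmetric]) (simp add: integral_distr)

lemma integral_gauss_prod:
  fixes f :: "nat \<Rightarrow> real \<Rightarrow> real"
  assumes "\<And>j. integrable std_normal (f j)"
  shows "integrable (gauss d) (\<lambda>x. \<Prod>j<d. f j (x j))"
    and "(\<integral>x. (\<Prod>j<d. f j (x j)) \<partial>gauss d) = (\<Prod>j<d. \<integral>y. f j y \<partial>std_normal)"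
proof -
  interpret P: product_prob_space "\<lambda>_::nat. std_normal"
    by (rule product_prob_space_std_normal)
  show "integrable (gauss d) (\<lambda>x. \<Prod>j<d. f j (x j))"
    unfolding gauss_eq_PiM by (rule P.product_integrable_prod) (auto intro: assms)
  show "(\<integral>x. (\<Prod>j<d. f j (x j)) \<partial>gauss d) = (\<Prod>j<d. \<integral>y. f j y \<partial>std_normal)"
    unfolding gauss_eq_PiM by (rule P.product_integral_prod) (auto intro: assms)
qed

lemma integrable_gauss_coord:
  assumes "i < d"
  shows "integrable (gauss d) (\<lambda>x. x i)"
proof -
  interpret prob_space std_normal
    by (rule prob_space_std_normal)
  have "integrable std_normal (\<lambda>y. if j = i then y else 1)" for j
    using integrable_std_normal_id by (cases "j = i") auto
  then show ?thesis
    using integral_gauss_prod(1)[of "\<lambda>j y. if j = i then y else 1" d] assms by simp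
qed

lemma integral_gauss_coord_mult:
  assumes "j < d" "k < d"
  shows "integrable (gauss d) (\<lambda>x. x j * x k)"
    and "(\<integral>x. x j * x k \<partial>gauss d) = (if j = k then 1 else 0)"
proof -
  interpret prob_space std_normal
    by (rule prob_space_std_normal)
  define f where "f l y = (if l = j then y else 1) * (if l = k then y else (1::real))" for l y
  have eq: "(\<lambda>x. \<Prod>l<d. f l (x l)) = (\<lambda>x. x j * x k)"
    using assms by (auto simp: fun_eq_iff f_def prod.distrib)
  have "integrable std_normal (f l)" for l
    unfolding f_def using integrable_std_normal_id integrable_std_normal_square
    by (cases "l = j"; cases "l = k") auto
  note prod_facts = integral_gauss_prod[of f d, OF this, unfolded eq]
  have integral_f: "(\<integral>y. f l y \<partial>std_normal) = (if l = j \<longleftrightarrow> l = k then 1 else 0)" for l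
    unfolding f_def using integral_std_normal_id integral_std_normal_square prob_space
    by (cases "l = j"; cases "l = k") auto
  show "integrable (gauss d) (\<lambda>x. x j * x k)"
    by (rule prod_facts(1))
  show "(\<integral>x. x j * x k \<partial>gauss d) = (if j = k then 1 else 0)"
  proof (cases "j = k")
    case False
    then have "(\<Prod>l<d. \<integral>y. f l y \<partial>std_normal) = 0"
      using assms unfolding integral_f by (intro prod_zero) auto
    then show ?thesis
      using False unfolding prod_facts(2) by simp
  qed (use prod_facts(2) integral_f in simp)
qed

lemma integrable_gauss_vdot: "integrable (gauss d) (vdot d \<theta>)"
  unfolding vdot_def[abs_def]
  by (intro Bochner_Integration.integrable_sum integrable_mult_right integrable_gauss_coord) simp

lemma integrable_gauss_vdot_square: "integrable (gauss d) (\<lambda>x. (vdot d \<theta> x)\<^sup>2)"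
  and integral_gauss_vdot_square: "(\<integral>x. (vdot d \<theta> x)\<^sup>2 \<partial>gauss d) = (vnorm d \<theta>)\<^sup>2"
proof -
  have square: "(vdot d \<theta> x)\<^sup>2 = (\<Sum>j<d. \<Sum>k<d. \<theta> j * \<theta> k * (x j * x k))" for x
    unfolding vdot_def power2_eq_square sum_product by (simp add: algebra_simps)
  have int: "integrable (gauss d) (\<lambda>x. \<theta> j * \<theta> k * (x j * x k))" if "j < d" "k < d" for j k
    using integral_gauss_coord_mult(1)[OF that] by simp
  show "integrable (gauss d) (\<lambda>x. (vdot d \<theta> x)\<^sup>2)"
    unfolding square by (auto intro!: int simp del: integrable_mult_right_iff)
  have "(\<integral>x. (vdot d \<theta> x)\<^sup>2 \<partial>gauss d) = (\<Sum>j<d. \<Sum>k<d. \<integral>x. \<theta> j * \<theta> k * (x j * x k) \<partial>gauss d)"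
    unfolding square
    by (subst Bochner_Integration.integral_sum, fastforce intro: Bochner_Integration.integrable_sum int)
       (auto intro!: sum.cong Bochner_Integration.integral_sum int simp del: integral_mult_right_zero)
  also have "\<dots> = (\<Sum>j<d. \<Sum>k<d. \<theta> j * \<theta> k * (\<integral>x. x j * x k \<partial>gauss d))"
    by simp
  also have "\<dots> = (\<Sum>j<d. (\<theta> j)\<^sup>2)"
    by (simp add: integral_gauss_coord_mult(2) power2_eq_square if_distrib cong: if_cong)
  finally show "(\<integral>x. (vdot d \<theta> x)\<^sup>2 \<partial>gauss d) = (vnorm d \<theta>)\<^sup>2"
    by (simp add: vnorm_square)
qed

lemma abs_le_half_square_div_plus:
  fixes s t :: real
  assumes "0 < t"
  shows "\<bar>s\<bar> \<le> (s\<^sup>2 / t + t) / 2"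
proof -
  have "0 \<le> (\<bar>s\<bar> - t)\<^sup>2"
    by simp
  then show ?thesis
    using assms by (simp add: field_simps power2_eq_square algebra_simps)
qed

lemma integral_gauss_abs_vdot_le: "(\<integral>x. \<bar>vdot d \<theta> x\<bar> \<partial>gauss d) \<le> vnorm d \<theta>"
proof (cases "vnorm d \<theta> = 0")
  case True
  then show ?thesis
    by (simp add: vdot_eq_0_if_vnorm_eq_0)
next
  case False
  define t where "t = vnorm d \<theta>"
  interpret prob_space "gauss d"
    by (rule prob_space_gauss)
  have t: "0 < t"
    using False vnorm_nonneg[of d \<theta>] unfolding t_def by simp
  have "(\<integral>x. \<bar>vdot d \<theta> x\<bar> \<partial>gauss d) \<le> (\<integral>x. ((vdot d \<theta> x)\<^sup>2 / t + t) / 2 \<partial>gauss d)"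
    using integrable_gauss_vdot integrable_gauss_vdot_square abs_le_half_square_div_plus[OF t]
    by (intro integral_mono) auto
  also have "\<dots> = ((\<integral>x. (vdot d \<theta> x)\<^sup>2 \<partial>gauss d) / t + t) / 2"
    using integrable_gauss_vdot_square[of d \<theta>] by (simp add: prob_space)
  also have "\<dots> = t"
    unfolding integral_gauss_vdot_square t_def[symmetric] using t by (simp add: power2_eq_square)
  finally show ?thesis
    unfolding t_def .
qed

lemma integral_gauss_vdot_nonpos_ge_half:
  "1/2 \<le> (\<integral>x. (if vdot d \<theta> x \<le> 0 then 1 else 0::real) \<partial>gauss d)"
proof -
  interpret prob_space "gauss d"
    by (rule prob_space_gauss)
  let ?neg = "\<lambda>x. if vdot d \<theta> x \<le> 0 then 1 else 0::real"
  let ?pos = "\<lambda>x. if 0 \<le> vdot d \<theta> x then 1 else 0::real"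
  have int: "integrable (gauss d) ?neg" "integrable (gauss d) ?pos"
    by (auto intro!: integrable_const_bound[where B = 1])
  have "(\<integral>x. ?pos x \<partial>gauss d) = (\<integral>x. ?neg x \<partial>gauss d)"
    using integral_gauss_vneg[of ?neg d] by (simp add: vdot_vneg)
  moreover have "1 \<le> (\<integral>x. ?neg x + ?pos x \<partial>gauss d)"
    using int prob_space integral_mono[of "gauss d" "\<lambda>_. 1" "\<lambda>x. ?neg x + ?pos x"] by auto
  ultimately show ?thesis
    using int by simp
qed

lemma gauss_stein:
  fixes g g' :: "real \<Rightarrow> real"
  assumes der: "\<And>s. (g has_real_derivative g' s) (at s)"
    and cont: "continuous_on UNIV g'"
    and bound: "\<And>s. \<bar>g s\<bar> \<le> B" and bound': "\<And>s. \<bar>g' s\<bar> \<le> B"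
    and i: "i < d"
  shows "(\<integral>x. g (vdot d \<theta> x) * x i \<partial>gauss d) = \<theta> i * (\<integral>x. g' (vdot d \<theta> x) \<partial>gauss d)"
proof -
  interpret P: product_prob_space "\<lambda>_::nat. std_normal"
    by (rule product_prob_space_std_normal)
  interpret G: prob_space "gauss d"
    by (rule prob_space_gauss)
  define J where "J = {..<d} - {i}"
  have J: "{..<d} = insert i J" "i \<notin> J" "finite J"
    using i by (auto simp: J_def)
  have gauss_insert: "gauss d = PiM (insert i J) (\<lambda>_. std_normal)"
    unfolding gauss_eq_PiM J(1) ..
  define c where "c x = (\<Sum>j\<in>J. \<theta> j * x j)" for x
  have vdot_upd: "vdot d \<theta> (x(i := y)) = c x + \<theta> i * y" for x y
  proof -
    have "(\<Sum>j\<in>J. \<theta> j * (x(i := y)) j) = c x"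
      unfolding c_def using J(2) by (intro sum.cong) auto
    then show ?thesis
      unfolding vdot_def J(1) using J(2,3) by simp
  qed
  have "continuous_on UNIV g"
    using der by (intro continuous_at_imp_continuous_on ballI DERIV_isCont) auto
  then have [measurable]: "g \<in> borel_measurable borel" "g' \<in> borel_measurable borel"
    using cont by (auto intro: borel_measurable_continuous_onI)
  have int_g: "integrable (gauss d) (\<lambda>x. g (vdot d \<theta> x) * x i)"
    using bound by (intro integrable_bounded_mult integrable_gauss_coord[OF i]) auto
  have int_g': "integrable (gauss d) (\<lambda>x. g' (vdot d \<theta> x))"
    using bound' by (intro G.integrable_const_bound[where B = B]) auto
  have "(\<integral>x. g (vdot d \<theta> x) * x i \<partial>gauss d) =
      (\<integral>x. (\<integral>y. g (c x + \<theta> i * y) * y \<partial>std_normal) \<partial>PiM J (\<lambda>_. std_normal))"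
    using P.product_integral_insert[OF J(3,2) int_g[unfolded gauss_insert]]
    by (simp add: gauss_insert vdot_upd)
  also have "\<dots> = (\<integral>x. \<theta> i * (\<integral>y. g' (c x + \<theta> i * y) \<partial>std_normal) \<partial>PiM J (\<lambda>_. std_normal))"
    by (simp add: std_normal_stein_affine[OF der cont bound bound'])
  also have "\<dots> = \<theta> i * (\<integral>x. g' (vdot d \<theta> x) \<partial>gauss d)"
    using P.product_integral_insert[OF J(3,2) int_g'[unfolded gauss_insert]]
    by (simp add: gauss_insert vdot_upd)
  finally show ?thesis .
qed

section \<open>The EM operators\<close>

text \<open>The posterior weight of the first component of a two-point mixture with log-likelihoods
  \<open>- A/2\<close> and \<open>- B/2\<close>.\<close>
lemma posterior_weight_eq_sigmoid:
  assumes "0 < p" "p < 1"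
  shows "p * exp (- A / 2) / (p * exp (- A / 2) + (1 - p) * exp (- B / 2))
    = sigmoid (ln (p / (1 - p)) + (B - A) / 2)"
proof -
  define E e where "E = exp (- A / 2)" and "e = exp (- ((B - A) / 2))"
  have pos: "0 < E" "0 < e"
    by (simp_all add: E_def e_def)
  have exp_B: "exp (- B / 2) = E * e"
    unfolding E_def e_def by (simp flip: exp_add) (simp add: field_simps)
  have "exp (- ln (p / (1 - p))) = (1 - p) / p"
    using assms by (simp add: exp_minus)
  then have odds: "exp (- (ln (p / (1 - p)) + (B - A) / 2)) = (1 - p) / p * e"
    unfolding e_def by (simp only: minus_add_distrib exp_add)
  have den: "p + (1 - p) * e \<noteq> 0"
    using assms pos by (intro add_pos_nonneg[THEN less_imp_neq, symmetric]) auto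
  have "p * E / (p * E + (1 - p) * (E * e)) = (E * p) / (E * (p + (1 - p) * e))"
    by (simp add: algebra_simps)
  also have "\<dots> = p / (p + (1 - p) * e)"
    using pos by simp
  also have "\<dots> = 1 / (1 + (1 - p) / p * e)"
    using assms den by (simp add: field_simps)
  finally show ?thesis
    unfolding sigmoid_def odds exp_B E_def[symmetric] .
qed

lemma wgt_eq_sigmoid:
  assumes "0 < pw" "pw < 1"
  shows "wgt d \<theta> pw x = sigmoid (ln (pw / (1 - pw)) + 2 * vdot d \<theta> x)"
  unfolding wgt_def posterior_weight_eq_sigmoid[OF assms] vnorm_add_square_minus_diff_square
  by simp

lemma M1_bound:
  assumes pw: "0 < pw" "pw \<le> 1/2"
  shows "\<bar>M1 d \<theta> pw - pw\<bar> \<le> (1 - 501/1000 * (1 - 2 * pw)\<^sup>2) * vnorm d \<theta> / 2"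
proof -
  interpret prob_space "gauss d"
    by (rule prob_space_gauss)
  define a where "a = ln (pw / (1 - pw))"
  define K where "K = 1 - 501/1000 * (1 - 2 * pw)\<^sup>2"
  define h where "h x = sigmoid (a + 2 * vdot d \<theta> x) + sigmoid (a - 2 * vdot d \<theta> x) - 2 * pw" for x
  have sigmoid_a: "sigmoid a = pw"
    unfolding a_def using pw by (intro sigmoid_logit) auto
  have a: "a \<le> 0"
    unfolding a_def using pw by (subst ln_le_zero_iff) (auto simp: divide_simps)
  have int: "integrable (gauss d) (\<lambda>x. sigmoid (a + s * vdot d \<theta> x))" for s
    by (intro integrable_const_bound[where B = 1]) (auto intro: abs_sigmoid_le_1)
  have "wgt d \<theta> pw = (\<lambda>x. sigmoid (a + 2 * vdot d \<theta> x))"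
    unfolding a_def using pw by (simp add: wgt_eq_sigmoid fun_eq_iff)
  then have M1_eq: "M1 d \<theta> pw = (\<integral>x. sigmoid (a + 2 * vdot d \<theta> x) \<partial>gauss d)"
    unfolding M1_def by simp
  also have "\<dots> = (\<integral>x. sigmoid (a - 2 * vdot d \<theta> x) \<partial>gauss d)"
    using integral_gauss_vneg[of "\<lambda>x. sigmoid (a + 2 * vdot d \<theta> x)" d]
    by (simp add: vdot_vneg)
  finally have "2 * (M1 d \<theta> pw - pw) = (\<integral>x. h x \<partial>gauss d)"
    using int[of 2] int[of "- 2"] M1_eq by (simp add: h_def prob_space)
  then have "2 * \<bar>M1 d \<theta> pw - pw\<bar> = \<bar>\<integral>x. h x \<partial>gauss d\<bar>"
    by (metis abs_mult abs_numeral)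
  also have "\<dots> \<le> (\<integral>x. \<bar>h x\<bar> \<partial>gauss d)"
    using integral_norm_bound[of "gauss d" h] by simp
  also have "\<dots> \<le> (\<integral>x. K * \<bar>vdot d \<theta> x\<bar> \<partial>gauss d)"
  proof (rule integral_mono)
    show "integrable (gauss d) (\<lambda>x. \<bar>h x\<bar>)"
      using int[of 2] int[of "- 2"] by (simp add: h_def)
    show "integrable (gauss d) (\<lambda>x. K * \<bar>vdot d \<theta> x\<bar>)"
      using integrable_gauss_vdot by auto
    show "\<bar>h x\<bar> \<le> K * \<bar>vdot d \<theta> x\<bar>" for x
      using sigmoid_second_difference_le[OF a, of "2 * vdot d \<theta> x"]
      by (simp add: h_def K_def sigmoid_a abs_mult)
  qed
  also have "\<dots> \<le> K * vnorm d \<theta>"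
  proof -
    have "0 \<le> K"
      using pw power_le_one[of "1 - 2 * pw" 2] by (simp add: K_def)
    then show ?thesis
      using integral_gauss_abs_vdot_le by (simp add: mult_left_mono)
  qed
  finally show ?thesis
    by (simp add: K_def)
qed

lemma M2_bound:
  assumes pw: "0 < pw" "pw \<le> 1/2"
  shows "vnorm d (M2 d \<theta> pw) \<le> (1 - (1 - 2 * pw)\<^sup>2 / 2) * vnorm d \<theta>"
proof -
  interpret prob_space "gauss d"
    by (rule prob_space_gauss)
  define a where "a = ln (pw / (1 - pw))"
  define r where "r = (1 - 2 * pw)\<^sup>2"
  define g where "g s = 2 * sigmoid (a + 2 * s) - 1" for s
  define g' where "g' s = 4 * (sigmoid (a + 2 * s) * (1 - sigmoid (a + 2 * s)))" for s
  define E where "E = (\<integral>x. g' (vdot d \<theta> x) \<partial>gauss d)"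
  have sigmoid_a: "sigmoid a = pw"
    unfolding a_def using pw by (intro sigmoid_logit) auto
  have der: "(g has_real_derivative g' s) (at s)" for s
  proof -
    have "((\<lambda>s. a + 2 * s) has_real_derivative 2) (at s)"
      by (auto intro!: derivative_eq_intros)
    from DERIV_chain2[OF has_real_derivative_sigmoid this]
    show ?thesis
      unfolding g_def[abs_def] g'_def by (auto intro!: derivative_eq_intros)
  qed
  have cont: "continuous_on UNIV g'"
    unfolding g'_def[abs_def] by (intro continuous_intros continuous_on_compose2[OF continuous_on_sigmoid]) auto
  have g_bound: "\<bar>g s\<bar> \<le> 1" and g'_nonneg: "0 \<le> g' s" and g'_le: "g' s \<le> 1" for s
    using sigmoid_pos[of "a + 2 * s"] sigmoid_less_1[of "a + 2 * s"]
      sigmoid_slope_le_quarter[of "a + 2 * s"]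
    by (simp_all add: g_def g'_def)
  have g'_abs: "\<bar>g' s\<bar> \<le> 1" for s
    using g'_nonneg[of s] g'_le[of s] by simp
  have "M2 d \<theta> pw i = E * \<theta> i" if "i < d" for i
  proof -
    have "M2 d \<theta> pw i = (\<integral>x. g (vdot d \<theta> x) * x i \<partial>gauss d)"
      using that pw by (simp add: M2_def g_def a_def wgt_eq_sigmoid)
    also have "\<dots> = E * \<theta> i"
      unfolding E_def by (simp add: gauss_stein[OF der cont g_bound g'_abs that])
    finally show ?thesis .
  qed
  then have "vnorm d (M2 d \<theta> pw) = \<bar>E\<bar> * vnorm d \<theta>"
    by (simp add: vnorm_cong[of d _ "\<lambda>i. E * \<theta> i"] vnorm_scale)
  also have "\<dots> = E * vnorm d \<theta>"
    unfolding E_def using g'_nonneg by (simp add: integral_nonneg_AE)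
  also have "\<dots> \<le> (1 - r / 2) * vnorm d \<theta>"
  proof (rule mult_right_mono[OF _ vnorm_nonneg])
    let ?neg = "\<lambda>x. if vdot d \<theta> x \<le> 0 then 1 else 0 :: real"
    have int_neg: "integrable (gauss d) ?neg"
      by (intro integrable_const_bound[where B = 1]) auto
    have "g' (vdot d \<theta> x) \<le> 1 - r * ?neg x" for x
    proof (cases "vdot d \<theta> x \<le> 0")
      case True
      then have "sigmoid (a + 2 * vdot d \<theta> x) \<le> pw"
        using sigmoid_mono[of "a + 2 * vdot d \<theta> x" a] by (simp add: sigmoid_a)
      then have "g' (vdot d \<theta> x) \<le> 4 * (pw * (1 - pw))"
        using mult_one_minus_mono[OF less_imp_le[OF sigmoid_pos] _ pw(2)] by (simp add: g'_def)
      also have "\<dots> = 1 - r"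
        by (simp add: r_def power2_eq_square algebra_simps)
      finally show ?thesis
        using True by simp
    qed (use g'_le in simp)
    moreover have "integrable (gauss d) (\<lambda>x. g' (vdot d \<theta> x))"
      using cont g'_abs
      by (intro integrable_const_bound[where B = 1])
         (auto intro: borel_measurable_continuous_onI measurable_compose[OF borel_measurable_vdot])
    ultimately have "E \<le> (\<integral>x. 1 - r * ?neg x \<partial>gauss d)"
      unfolding E_def using int_neg by (intro integral_mono) auto
    also have "\<dots> = 1 - r * (\<integral>x. ?neg x \<partial>gauss d)"
      using int_neg prob_space by simp
    also have "\<dots> \<le> 1 - r / 2"
      using mult_left_mono[OF integral_gauss_vdot_nonpos_ge_half, of r d \<theta>] by (simp add: r_def)
    finally show "E \<le> 1 - r / 2" .
  qed
  finally show ?thesis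
    unfolding r_def .
qed

theorem lemma6:
  shows "\<exists>c::real. 1/2 < c \<and> c < 1 \<and>
    (\<forall>d::nat. \<forall>\<theta>::nat \<Rightarrow> real. \<forall>pw::real.
       1 \<le> d \<and> 0 < pw \<and> pw \<le> 1/2 \<longrightarrow>
       (let \<rho> = 1 - 2 * pw in
          \<bar>M1 d \<theta> pw - pw\<bar> \<le> (1 - c * \<rho>\<^sup>2) * vnorm d \<theta> / 2 \<and>
          vnorm d (M2 d \<theta> pw) \<le> (1 - \<rho>\<^sup>2 / 2) * vnorm d \<theta>))"
  using M1_bound M2_bound by (intro exI[of _ "501/1000"]) (simp add: Let_def)

end
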